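(* Let $L=\mathbb{Z}\times\mathbb{Z}$ with the product $$(p,q)\cdot(p',q')=\Bigl(p+p',\ q+q'+\binom{p}{2}p'\Bigr).$$ Then $L$ is a loop which is torsion-free nilpotent of class $3$, with $$D_2L=D_3L=\{(0,q)\mid q\in\mathbb{Z}\},$$ while $\mathrm{LMlt}(L)$ is nilpotent of class $2$.
   Context: Here $\binom{p}{2}=p(p-1)/2$ for $p\in\mathbb{Z}$. A loop is a set with a product and two-sided identity in which all left multiplications $x\mapsto ax$ and right multiplications $x\mapsto xa$ are bijective. $\mathrm{LMlt}(L)$ is the group of permutations of $L$ generated by the left multiplications $L_a\colon x\mapsto ax$. The loop algebra $\mathbb{Q}L$ has basis $L$ with bilinearly extended product; $I$ is the kernel of the linear map $\mathbb{Q}L\to\mathbb{Q}$ sending each element of $L$ to $1$; $I^k$ is the ideal spanned by all products (any bracketing) of at least $k$ elements of $I$; $D_kL=\{g\in L\mid g-1\in I^k\}$. $L$ is torsion-free nilpotent of class $n$ if $D_{n+1}L$ is trivial and $D_nL$ is not. A group $G$ is nilpotent of class $c$ if $\gamma_{c+1}G=1\neq\gamma_cG$, where $\gamma_1G=G$, $\gamma_{k+1}G=[G,\gamma_kG]$. *)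

theory Defs
  imports Complex_Main "HOL-Algebra.Generated_Groups" "HOL-Algebra.Bij"
begin

definition is_loop :: "('a \<Rightarrow> 'a \<Rightarrow> 'a) \<Rightarrow> 'a \<Rightarrow> bool" where
  "is_loop m e \<longleftrightarrow> (\<forall>x. m e x = x \<and> m x e = x)
      \<and> (\<forall>a. bij (\<lambda>x. m a x)) \<and> (\<forall>a. bij (\<lambda>x. m x a))"

section \<open>The loop algebra QL: finitely supported functions L \<Rightarrow> rat\<close>

definition fin_supp :: "('a \<Rightarrow> rat) \<Rightarrow> bool" where
  "fin_supp f \<longleftrightarrow> finite {x. f x \<noteq> 0}"

definition basis_el :: "'a \<Rightarrow> ('a \<Rightarrow> rat)" where
  "basis_el g = (\<lambda>x. if x = g then 1 else 0)"

definition la_mult :: "('a \<Rightarrow> 'a \<Rightarrow> 'a) \<Rightarrow> ('a \<Rightarrow> rat) \<Rightarrow> ('a \<Rightarrow> rat) \<Rightarrow> ('a \<Rightarrow> rat)" where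
  "la_mult m f h = (\<lambda>z. \<Sum>(x, y) \<in> {(x, y). f x \<noteq> 0 \<and> h y \<noteq> 0 \<and> m x y = z}. f x * h y)"

definition augm :: "('a \<Rightarrow> rat) \<Rightarrow> rat" where
  "augm f = (\<Sum>x \<in> {x. f x \<noteq> 0}. f x)"

definition aug_ideal :: "('a \<Rightarrow> rat) set" where
  "aug_ideal = {f. fin_supp f \<and> augm f = 0}"

inductive I_prod :: "('a \<Rightarrow> 'a \<Rightarrow> 'a) \<Rightarrow> nat \<Rightarrow> ('a \<Rightarrow> rat) \<Rightarrow> bool"
  for m where
  base: "f \<in> aug_ideal \<Longrightarrow> I_prod m 1 f"
| mult: "I_prod m i f \<Longrightarrow> I_prod m j h \<Longrightarrow> I_prod m (i + j) (la_mult m f h)"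

text \<open>I^k: the two-sided ideal of QL generated by products of at least k elements of I\<close>
inductive_set I_pow :: "('a \<Rightarrow> 'a \<Rightarrow> 'a) \<Rightarrow> nat \<Rightarrow> ('a \<Rightarrow> rat) set"
  for m k where
  gen: "I_prod m n f \<Longrightarrow> k \<le> n \<Longrightarrow> f \<in> I_pow m k"
| zero: "(\<lambda>_. 0) \<in> I_pow m k"
| add: "f \<in> I_pow m k \<Longrightarrow> h \<in> I_pow m k \<Longrightarrow> (\<lambda>x. f x + h x) \<in> I_pow m k"
| smult: "f \<in> I_pow m k \<Longrightarrow> (\<lambda>x. c * f x) \<in> I_pow m k"
| lmult: "f \<in> I_pow m k \<Longrightarrow> fin_supp a \<Longrightarrow> la_mult m a f \<in> I_pow m k"
| rmult: "f \<in> I_pow m k \<Longrightarrow> fin_supp a \<Longrightarrow> la_mult m f a \<in> I_pow m k"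

definition dim_sub :: "('a \<Rightarrow> 'a \<Rightarrow> 'a) \<Rightarrow> 'a \<Rightarrow> nat \<Rightarrow> 'a set" where
  "dim_sub m e k = {g. (\<lambda>x. basis_el g x - basis_el e x) \<in> I_pow m k}"

definition tf_nilpotent_class :: "('a \<Rightarrow> 'a \<Rightarrow> 'a) \<Rightarrow> 'a \<Rightarrow> nat \<Rightarrow> bool" where
  "tf_nilpotent_class m e n \<longleftrightarrow> dim_sub m e (n + 1) = {e} \<and> dim_sub m e n \<noteq> {e}"

definition LMlt :: "('a \<Rightarrow> 'a \<Rightarrow> 'a) \<Rightarrow> ('a \<Rightarrow> 'a) monoid" where
  "LMlt m = subgroup_generated (BijGroup UNIV) (range (\<lambda>a. (\<lambda>x. m a x)))"

text \<open>lower_central G k = gamma_(k+1) G\<close>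
primrec lower_central :: "('a, 'b) monoid_scheme \<Rightarrow> nat \<Rightarrow> 'a set" where
  "lower_central G 0 = carrier G"
| "lower_central G (Suc k) = generate G
     {inv\<^bsub>G\<^esub> g \<otimes>\<^bsub>G\<^esub> inv\<^bsub>G\<^esub> h \<otimes>\<^bsub>G\<^esub> g \<otimes>\<^bsub>G\<^esub> h | g h. g \<in> carrier G \<and> h \<in> lower_central G k}"

definition nilpotent_class :: "('a, 'b) monoid_scheme \<Rightarrow> nat \<Rightarrow> bool" where
  "nilpotent_class G c \<longleftrightarrow> 1 \<le> c \<and> lower_central G c = {\<one>\<^bsub>G\<^esub>} \<and> lower_central G (c - 1) \<noteq> {\<one>\<^bsub>G\<^esub>}"

definition binom2 :: "int \<Rightarrow> int" where
  "binom2 p = p * (p - 1) div 2"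

definition exloop :: "int \<times> int \<Rightarrow> int \<times> int \<Rightarrow> int \<times> int" where
  "exloop a b = (case a of (p, q) \<Rightarrow> case b of (p', q') \<Rightarrow>
      (p + p', q + q' + binom2 p * p'))"

end

theory Submission
  imports Defs
begin

text \<open>
  A function \<open>F : L \<rightarrow> \<rat>\<close> defines the functional \<open>\<langle>F, f\<rangle> = \<Sum>\<^sub>x f(x) F(x)\<close> on \<open>\<rat>L\<close>.
  A functional that kills all products of at least \<open>k\<close> elements of \<open>I\<close> kills \<open>I\<^sup>k\<close>,
  so \<open>g - 1 \<in> I\<^sup>k\<close> forces \<open>F(g) = F(1)\<close>. For the example, the first coordinate \<open>p\<close> is
  additive, and by the binomial theorem \<open>p\<^sup>k\<close> kills every product of more than \<open>k\<close>
  elements of \<open>I\<close>; the second coordinate \<open>q\<close> kills products of four of them, because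
  \<open>q(xy) - q(x) - q(y) = binom2(p(x)) p(y)\<close> has degree three. Hence \<open>D\<^sub>2L \<subseteq> {p = 0}\<close>
  and \<open>D\<^sub>4L = 1\<close>. Conversely, \<open>(0,q) - 1\<close> is a left translate of the associator of
  \<open>(1,0) - 1\<close>, \<open>(1,0) - 1\<close> and \<open>(q,0) - 1\<close>, so it lies in \<open>I\<^sup>3\<close>.

  The left multiplications are affine maps \<open>(p,q) \<mapsto> (p + a, q + b + c p)\<close>. These form a
  Heisenberg group, whose commutators are central, and \<open>L\<^bsub>(1,0)\<^esub>\<close>, \<open>L\<^bsub>(2,0)\<^esub>\<close> do not commute.
\<close>

section \<open>Functionals on the loop algebra\<close>

definition pairing :: "('a \<Rightarrow> rat) \<Rightarrow> ('a \<Rightarrow> rat) \<Rightarrow> rat" where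
  "pairing F f = (\<Sum>x | f x \<noteq> 0. f x * F x)"

definition basis_diff :: "'a \<Rightarrow> 'a \<Rightarrow> 'a \<Rightarrow> rat" where
  "basis_diff g h = (\<lambda>x. basis_el g x - basis_el h x)"

lemma fin_supp_basis_el [simp]: "fin_supp (basis_el a)"
  unfolding fin_supp_def basis_el_def by simp

lemma fin_supp_zero [simp]: "fin_supp (\<lambda>_. 0)"
  by (simp add: fin_supp_def)

lemma fin_supp_add [simp]: "fin_supp f \<Longrightarrow> fin_supp h \<Longrightarrow> fin_supp (\<lambda>x. f x + h x)"
  unfolding fin_supp_def by (rule finite_subset[of _ "{x. f x \<noteq> 0} \<union> {x. h x \<noteq> 0}"]) auto

lemma fin_supp_diff [simp]: "fin_supp f \<Longrightarrow> fin_supp h \<Longrightarrow> fin_supp (\<lambda>x. f x - h x)"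
  unfolding fin_supp_def by (rule finite_subset[of _ "{x. f x \<noteq> 0} \<union> {x. h x \<noteq> 0}"]) auto

lemma fin_supp_smult [simp]: "fin_supp f \<Longrightarrow> fin_supp (\<lambda>x. c * f x)"
  unfolding fin_supp_def by (rule finite_subset[of _ "{x. f x \<noteq> 0}"]) auto

lemma fin_supp_basis_diff [simp]: "fin_supp (basis_diff g h)"
  by (simp add: basis_diff_def)

lemma la_mult_support:
  "{z. la_mult m f h z \<noteq> 0} \<subseteq> (\<lambda>(x, y). m x y) ` ({x. f x \<noteq> 0} \<times> {y. h y \<noteq> 0})"
proof
  fix z assume "z \<in> {z. la_mult m f h z \<noteq> 0}"
  then have "{(x, y). f x \<noteq> 0 \<and> h y \<noteq> 0 \<and> m x y = z} \<noteq> {}"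
    unfolding la_mult_def by force
  then show "z \<in> (\<lambda>(x, y). m x y) ` ({x. f x \<noteq> 0} \<times> {y. h y \<noteq> 0})" by force
qed

lemma fin_supp_la_mult [simp]: "fin_supp f \<Longrightarrow> fin_supp h \<Longrightarrow> fin_supp (la_mult m f h)"
  unfolding fin_supp_def using la_mult_support by (metis finite_SigmaI finite_imageI finite_subset)

lemma pairing_superset:
  assumes "finite A" "{x. f x \<noteq> 0} \<subseteq> A"
  shows "pairing F f = (\<Sum>x\<in>A. f x * F x)"
  unfolding pairing_def using assms by (intro sum.mono_neutral_left) auto

lemma pairing_add_fun [simp]: "pairing (\<lambda>x. F x + G x) f = pairing F f + pairing G f"
  unfolding pairing_def by (simp add: distrib_left sum.distrib)

lemma pairing_diff_fun [simp]: "pairing (\<lambda>x. F x - G x) f = pairing F f - pairing G f"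
  unfolding pairing_def by (simp add: right_diff_distrib sum_subtractf)

lemma pairing_const_mult_fun [simp]: "pairing (\<lambda>x. c * F x) f = c * pairing F f"
  unfolding pairing_def by (simp add: sum_distrib_left mult_ac)

lemma pairing_mult_const_fun [simp]: "pairing (\<lambda>x. F x * c) f = pairing F f * c"
  unfolding pairing_def sum_distrib_right by (simp add: mult.assoc)

lemma pairing_sum_fun: "pairing (\<lambda>x. \<Sum>i\<in>I. G i x) f = (\<Sum>i\<in>I. pairing (G i) f)"
  unfolding pairing_def by (simp add: sum_distrib_left sum.swap[of _ I])

lemma pairing_const_eq_0: "pairing (\<lambda>_. 1) f = 0 \<Longrightarrow> pairing (\<lambda>_. c) f = 0"
  using pairing_const_mult_fun[of c "\<lambda>_. 1" f] by simp

lemma pairing_diff: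
  assumes "fin_supp f" "fin_supp h"
  shows "pairing F (\<lambda>x. f x - h x) = pairing F f - pairing F h"
proof -
  let ?A = "{x. f x \<noteq> 0} \<union> {x. h x \<noteq> 0}"
  have "finite ?A" using assms unfolding fin_supp_def by simp
  then have "pairing F (\<lambda>x. f x - h x) = (\<Sum>x\<in>?A. (f x - h x) * F x)"
    "pairing F f = (\<Sum>x\<in>?A. f x * F x)" "pairing F h = (\<Sum>x\<in>?A. h x * F x)"
    by (auto intro!: pairing_superset)
  then show ?thesis by (simp add: left_diff_distrib sum_subtractf)
qed

lemma pairing_add:
  assumes "fin_supp f" "fin_supp h"
  shows "pairing F (\<lambda>x. f x + h x) = pairing F f + pairing F h"
  using pairing_diff[of "\<lambda>x. f x + h x" h F] assms by simp

lemma pairing_smult: "pairing F (\<lambda>x. c * f x) = c * pairing F f"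
  by (cases "c = 0") (simp_all add: pairing_def sum_distrib_left mult_ac)

lemma pairing_basis_el [simp]: "pairing F (basis_el a) = F a"
  by (subst pairing_superset[of "{a}"]) (auto simp: basis_el_def)

lemma pairing_basis_el_fun:
  assumes "fin_supp f"
  shows "pairing (basis_el z) f = f z"
proof -
  let ?S = "insert z {x. f x \<noteq> 0}"
  have "finite ?S" using assms by (simp add: fin_supp_def)
  then have "pairing (basis_el z) f = (\<Sum>x\<in>?S. f x * basis_el z x)"
    by (rule pairing_superset) auto
  also have "\<dots> = (\<Sum>x\<in>?S. if z = x then f x else 0)"
    by (intro sum.cong) (auto simp: basis_el_def)
  finally show ?thesis
    using \<open>finite ?S\<close> by simp
qed

lemma pairing_basis_diff [simp]: "pairing F (basis_diff g h) = F g - F h"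
  by (simp add: basis_diff_def pairing_diff)

lemma pairing_la_mult:
  assumes "fin_supp f" "fin_supp h"
  shows "pairing F (la_mult m f h) = pairing (\<lambda>x. pairing (\<lambda>y. F (m x y)) h) f"
proof -
  let ?A = "{x. f x \<noteq> 0}" and ?B = "{y. h y \<noteq> 0}" and ?mu = "\<lambda>p. m (fst p) (snd p)"
  let ?c = "\<lambda>p. f (fst p) * h (snd p) * F (?mu p)"
  have fin: "finite ?A" "finite ?B" using assms unfolding fin_supp_def by auto
  have la: "la_mult m f h z = (\<Sum>p\<in>{p \<in> ?A \<times> ?B. ?mu p = z}. f (fst p) * h (snd p))" for z
    unfolding la_mult_def by (intro sum.cong) auto
  have "{z. la_mult m f h z \<noteq> 0} \<subseteq> ?mu ` (?A \<times> ?B)"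
    using la_mult_support[of m f h] by (auto simp: case_prod_beta)
  then have "pairing F (la_mult m f h) = (\<Sum>z\<in>?mu ` (?A \<times> ?B). la_mult m f h z * F z)"
    using fin by (intro pairing_superset) auto
  also have "\<dots> = (\<Sum>z\<in>?mu ` (?A \<times> ?B). \<Sum>p\<in>{p \<in> ?A \<times> ?B. ?mu p = z}. ?c p)"
    unfolding la sum_distrib_right by (intro sum.cong refl) auto
  also have "\<dots> = (\<Sum>p\<in>?A \<times> ?B. ?c p)"
    using fin by (intro sum.group) auto
  also have "\<dots> = pairing (\<lambda>x. pairing (\<lambda>y. F (m x y)) h) f"
    by (simp add: pairing_def sum_distrib_left sum.cartesian_product case_prod_beta mult_ac)
  finally show ?thesis .
qed

lemma pairing_la_mult_right:
  assumes "fin_supp f" "fin_supp h"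
  shows "pairing F (la_mult m f h) = pairing (\<lambda>y. pairing (\<lambda>x. F (m x y)) f) h"
  unfolding pairing_la_mult[OF assms] by (simp add: pairing_def sum_distrib_left sum.swap[of _ "{x. f x \<noteq> 0}"] mult_ac)

lemma la_mult_apply:
  assumes "fin_supp f" "fin_supp h"
  shows "la_mult m f h z = pairing (\<lambda>x. pairing (\<lambda>y. basis_el z (m x y)) h) f"
  using pairing_basis_el_fun[of "la_mult m f h" z] pairing_la_mult[OF assms] assms by simp

lemma la_mult_diff_left [simp]:
  assumes "fin_supp f1" "fin_supp f2" "fin_supp h"
  shows "la_mult m (\<lambda>x. f1 x - f2 x) h = (\<lambda>z. la_mult m f1 h z - la_mult m f2 h z)"
  using assms by (simp add: fun_eq_iff la_mult_apply pairing_diff)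

lemma la_mult_diff_right [simp]:
  assumes "fin_supp f" "fin_supp h1" "fin_supp h2"
  shows "la_mult m f (\<lambda>x. h1 x - h2 x) = (\<lambda>z. la_mult m f h1 z - la_mult m f h2 z)"
  using assms by (simp add: fun_eq_iff la_mult_apply pairing_diff)

lemma la_mult_basis_el [simp]: "la_mult m (basis_el a) (basis_el b) = basis_el (m a b)"
  by (simp add: fun_eq_iff la_mult_apply) (simp add: basis_el_def)

lemma la_mult_associator_basis_diff:
  assumes "is_loop m e"
  shows "(\<lambda>w. la_mult m (la_mult m (basis_diff x e) (basis_diff y e)) (basis_diff z e) w
             - la_mult m (basis_diff x e) (la_mult m (basis_diff y e) (basis_diff z e)) w)
         = basis_diff (m (m x y) z) (m x (m y z))"
  using assms by (simp add: is_loop_def basis_diff_def fun_eq_iff)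

section \<open>Dimension subloops\<close>

lemma augm_eq_pairing: "augm f = pairing (\<lambda>_. 1) f"
  by (simp add: augm_def pairing_def)

lemma basis_diff_in_aug_ideal: "basis_diff g h \<in> aug_ideal"
  by (simp add: aug_ideal_def augm_eq_pairing)

lemma I_prod_fin_supp: "I_prod m n f \<Longrightarrow> fin_supp f"
  by (induction rule: I_prod.induct) (simp_all add: aug_ideal_def)

lemma I_prod_pos: "I_prod m n f \<Longrightarrow> 0 < n"
  by (induction rule: I_prod.induct) simp_all

lemma I_pow_fin_supp: "f \<in> I_pow m k \<Longrightarrow> fin_supp f"
  by (induction rule: I_pow.induct) (simp_all add: I_prod_fin_supp)

lemma I_pow_mono: "f \<in> I_pow m k \<Longrightarrow> j \<le> k \<Longrightarrow> f \<in> I_pow m j"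
  by (induction rule: I_pow.induct) (auto intro: I_pow.intros)

lemma I_pow_diff: "f \<in> I_pow m k \<Longrightarrow> h \<in> I_pow m k \<Longrightarrow> (\<lambda>x. f x - h x) \<in> I_pow m k"
  using I_pow.add[OF _ I_pow.smult[of h m k "-1"], of f] by simp

lemma pairing_left_translate:
  assumes "is_loop m e" "fin_supp g"
  shows "pairing (\<lambda>y. F (m x y)) g = pairing F (la_mult m (basis_diff x e) g) + pairing F g"
  using assms by (simp add: pairing_la_mult is_loop_def)

lemma pairing_right_translate:
  assumes "is_loop m e" "fin_supp g"
  shows "pairing (\<lambda>y. F (m y x)) g = pairing F (la_mult m g (basis_diff x e)) + pairing F g"
  using assms by (simp add: pairing_la_mult_right is_loop_def)

lemma pairing_I_pow_eq_0:
  assumes loop: "is_loop m e" and "f \<in> I_pow m k"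
    and "\<And>n g. I_prod m n g \<Longrightarrow> k \<le> n \<Longrightarrow> pairing F g = 0"
  shows "pairing F f = 0"
  using assms(2,3)
proof (induction arbitrary: F rule: I_pow.induct)
  case (add f h)
  then show ?case by (simp add: pairing_add I_pow_fin_supp)
next
  case (smult f c)
  then show ?case by (simp add: pairing_smult)
next
  case (lmult f a)
  \<comment> \<open>The hypothesis on \<open>F\<close> passes to its translates: \<open>x g = (x - 1) g + g\<close>,
    and \<open>(x - 1) g\<close> is a longer product.\<close>
  have "pairing (\<lambda>y. F (m x y)) f = 0" for x
  proof (rule lmult.IH)
    fix n g assume "I_prod m n g" "k \<le> n"
    moreover have "I_prod m (1 + n) (la_mult m (basis_diff x e) g)"
      by (intro I_prod.intros basis_diff_in_aug_ideal \<open>I_prod m n g\<close>)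
    ultimately show "pairing (\<lambda>y. F (m x y)) g = 0"
      using lmult.prems pairing_left_translate[OF loop I_prod_fin_supp] by simp
  qed
  then show ?case
    using lmult.hyps by (simp add: pairing_la_mult I_pow_fin_supp) (simp add: pairing_def)
next
  case (rmult f a)
  have "pairing (\<lambda>y. F (m y x)) f = 0" for x
  proof (rule rmult.IH)
    fix n g assume "I_prod m n g" "k \<le> n"
    moreover have "I_prod m (n + 1) (la_mult m g (basis_diff x e))"
      by (intro I_prod.intros basis_diff_in_aug_ideal \<open>I_prod m n g\<close>)
    ultimately show "pairing (\<lambda>y. F (m y x)) g = 0"
      using rmult.prems pairing_right_translate[OF loop I_prod_fin_supp] by simp
  qed
  then show ?case
    using rmult.hyps by (simp add: pairing_la_mult_right I_pow_fin_supp) (simp add: pairing_def)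
qed (simp_all add: pairing_def)

lemma pairing_power_I_prod_eq_0:
  assumes "I_prod m n f" "k < n" and additive: "\<And>x y. \<phi> (m x y) = \<phi> x + \<phi> y"
  shows "pairing (\<lambda>x. \<phi> x ^ k) f = 0"
  using assms(1,2)
proof (induction arbitrary: k rule: I_prod.induct)
  case (base f)
  then show ?case by (simp add: aug_ideal_def augm_eq_pairing)
next
  case (mult i f j h)
  have "pairing (\<lambda>x. \<phi> x ^ k) (la_mult m f h) = pairing (\<lambda>x. pairing (\<lambda>y. (\<phi> x + \<phi> y) ^ k) h) f"
    using mult.hyps by (simp add: pairing_la_mult I_prod_fin_supp additive)
  also have "\<dots> = (\<Sum>l\<le>k. of_nat (k choose l) * pairing (\<lambda>x. \<phi> x ^ l) f * pairing (\<lambda>y. \<phi> y ^ (k - l)) h)"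
    by (simp add: binomial_ring pairing_sum_fun)
  also have "\<dots> = 0"
  proof (intro sum.neutral ballI)
    fix l assume "l \<in> {..k}"
    then have "l < i \<or> k - l < j" using mult.prems by auto
    then show "of_nat (k choose l) * pairing (\<lambda>x. \<phi> x ^ l) f * pairing (\<lambda>y. \<phi> y ^ (k - l)) h = 0"
      using mult.IH by auto
  qed
  finally show ?case .
qed

lemma dim_sub_antimono: "j \<le> k \<Longrightarrow> dim_sub m e k \<subseteq> dim_sub m e j"
  unfolding dim_sub_def using I_pow_mono by blast

lemma unit_in_dim_sub: "e \<in> dim_sub m e k"
  using I_pow.zero by (simp add: dim_sub_def)

lemma dim_sub_value_eq:
  assumes "is_loop m e" "g \<in> dim_sub m e k"
    and "\<And>n f. I_prod m n f \<Longrightarrow> k \<le> n \<Longrightarrow> pairing F f = 0"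
  shows "F g = F e"
  using pairing_I_pow_eq_0[of m e "basis_diff g e" k F] assms
  by (simp add: dim_sub_def basis_diff_def[symmetric])

lemma associator_in_dim_sub_3:
  assumes loop: "is_loop m e"
    and "m a (m (m x y) z) = g" "m a (m x (m y z)) = e"
  shows "g \<in> dim_sub m e 3"
proof -
  let ?d = "\<lambda>u. basis_diff u e"
  have "I_prod m 1 (?d u)" for u
    by (intro I_prod.base basis_diff_in_aug_ideal)
  then have "I_prod m ((1 + 1) + 1) (la_mult m (la_mult m (?d x) (?d y)) (?d z))"
    "I_prod m (1 + (1 + 1)) (la_mult m (?d x) (la_mult m (?d y) (?d z)))"
    by (intro I_prod.mult; assumption)+
  then have "(\<lambda>w. la_mult m (la_mult m (?d x) (?d y)) (?d z) w
             - la_mult m (?d x) (la_mult m (?d y) (?d z)) w) \<in> I_pow m 3"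
    by (intro I_pow_diff I_pow.gen) auto
  then have "la_mult m (basis_el a) (basis_diff (m (m x y) z) (m x (m y z))) \<in> I_pow m 3"
    unfolding la_mult_associator_basis_diff[OF loop] by (intro I_pow.lmult) simp_all
  with assms show ?thesis
    by (simp add: dim_sub_def basis_diff_def)
qed

section \<open>Lower central series\<close>

definition center :: "('a, 'b) monoid_scheme \<Rightarrow> 'a set" where
  "center G = {z \<in> carrier G. \<forall>g \<in> carrier G. g \<otimes>\<^bsub>G\<^esub> z = z \<otimes>\<^bsub>G\<^esub> g}"

context group
begin

lemma subgroup_center: "subgroup (center G) G"
proof (rule subgroupI)
  show "center G \<noteq> {}" using one_closed by (auto simp: center_def)
next
  fix z assume z: "z \<in> center G"
  have "g \<otimes> inv z = inv z \<otimes> g" if g: "g \<in> carrier G" for g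
  proof -
    have zc: "z \<in> carrier G" and comm: "g \<otimes> z = z \<otimes> g" using z g by (auto simp: center_def)
    have "g \<otimes> inv z = inv z \<otimes> (z \<otimes> g) \<otimes> inv z" using zc g by (simp add: m_assoc[symmetric])
    also have "\<dots> = inv z \<otimes> (g \<otimes> z) \<otimes> inv z" using comm by simp
    also have "\<dots> = inv z \<otimes> g" using zc g by (simp add: m_assoc)
    finally show ?thesis .
  qed
  then show "inv z \<in> center G" using z by (simp add: center_def)
next
  fix z w assume z: "z \<in> center G" and w: "w \<in> center G"
  have "g \<otimes> (z \<otimes> w) = z \<otimes> w \<otimes> g" if g: "g \<in> carrier G" for g
  proof -
    have zc: "z \<in> carrier G" "g \<otimes> z = z \<otimes> g" and wc: "w \<in> carrier G" "g \<otimes> w = w \<otimes> g"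
      using z w g unfolding center_def by blast+
    have "g \<otimes> (z \<otimes> w) = g \<otimes> z \<otimes> w" using zc(1) wc(1) g by (simp add: m_assoc)
    also have "\<dots> = z \<otimes> (g \<otimes> w)" using zc wc(1) g by (simp add: m_assoc)
    also have "\<dots> = z \<otimes> w \<otimes> g" using zc(1) wc g by (simp add: m_assoc)
    finally show ?thesis .
  qed
  moreover have "z \<otimes> w \<in> carrier G" using z w m_closed unfolding center_def by blast
  ultimately show "z \<otimes> w \<in> center G" unfolding center_def by blast
qed (auto simp: center_def)

lemma lower_central_Suc_subset:
  assumes "subgroup H G"
    and "\<And>g h. g \<in> carrier G \<Longrightarrow> h \<in> lower_central G k \<Longrightarrow> inv g \<otimes> inv h \<otimes> g \<otimes> h \<in> H"
  shows "lower_central G (Suc k) \<subseteq> H"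
  unfolding lower_central.simps by (rule generate_subgroup_incl) (use assms in auto)

lemma lower_central_Suc_trivial:
  assumes "lower_central G k \<subseteq> center G"
  shows "lower_central G (Suc k) = {\<one>}"
proof
  show "lower_central G (Suc k) \<subseteq> {\<one>}"
  proof (rule lower_central_Suc_subset[OF triv_subgroup])
    fix g h assume g: "g \<in> carrier G" and "h \<in> lower_central G k"
    then have h: "h \<in> carrier G" "g \<otimes> h = h \<otimes> g" using assms by (auto simp: center_def)
    have "inv g \<otimes> inv h \<otimes> g \<otimes> h = inv (h \<otimes> g) \<otimes> (g \<otimes> h)"
      using g h by (simp add: inv_mult_group m_assoc)
    also have "\<dots> = \<one>" using g h by simp
    finally show "inv g \<otimes> inv h \<otimes> g \<otimes> h \<in> {\<one>}" by simp
  qed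
  show "{\<one>} \<subseteq> lower_central G (Suc k)" by (simp add: generate.one)
qed

end

lemma group_LMlt: "group (LMlt m)"
  unfolding LMlt_def by (rule group.group_subgroup_generated[OF group_BijGroup])

section \<open>The example loop\<close>

lemma exloop_eq: "exloop x y = (fst x + fst y, snd x + snd y + binom2 (fst x) * fst y)"
  by (cases x, cases y) (simp add: exloop_def)

lemma is_loop_exloop: "is_loop exloop (0, 0)"
proof -
  have "bij (\<lambda>x. exloop a x)" for a
    by (rule o_bij[where g="\<lambda>y. (fst y - fst a, snd y - snd a - binom2 (fst a) * (fst y - fst a))"])
       (auto simp: exloop_eq fun_eq_iff)
  moreover have "bij (\<lambda>x. exloop x a)" for a
    by (rule o_bij[where g="\<lambda>y. (fst y - fst a, snd y - snd a - binom2 (fst y - fst a) * fst a)"])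
       (auto simp: exloop_eq fun_eq_iff)
  moreover have "exloop (0, 0) x = x \<and> exloop x (0, 0) = x" for x
    by (simp add: exloop_eq binom2_def)
  ultimately show ?thesis
    unfolding is_loop_def by blast
qed

lemma binom2_of_int: "(of_int (binom2 p) :: rat) = 1 / 2 * (of_int p ^ 2 - of_int p)"
proof -
  have "binom2 p * 2 = p * (p - 1)" unfolding binom2_def by simp
  then have "(of_int (binom2 p) :: rat) * 2 = of_int p * (of_int p - 1)"
    by (metis of_int_1 of_int_diff of_int_mult of_int_numeral)
  then show ?thesis by (simp add: power2_eq_square algebra_simps)
qed

lemma pairing_fst_power_I_prod_eq_0:
  "I_prod exloop n f \<Longrightarrow> k < n \<Longrightarrow> pairing (\<lambda>x. of_int (fst x) ^ k) f = 0"
  by (erule pairing_power_I_prod_eq_0) (simp_all add: exloop_eq)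

lemma pairing_snd_I_prod_eq_0:
  assumes "I_prod exloop n f" "4 \<le> n"
  shows "pairing (\<lambda>x. of_int (snd x)) f = 0"
  using assms
proof cases
  case (mult i g j h)
  let ?p = "\<lambda>x. of_int (fst x) :: rat" and ?q = "\<lambda>x. of_int (snd x) :: rat"
  have aug: "pairing (\<lambda>_. 1) g = 0" "pairing (\<lambda>_. 1) h = 0"
    using pairing_fst_power_I_prod_eq_0[of i g 0] pairing_fst_power_I_prod_eq_0[of j h 0]
      I_prod_pos[of exloop i g] I_prod_pos[of exloop j h] mult by simp_all
  have "pairing ?q f = pairing (\<lambda>x. pairing (\<lambda>y. ?q (exloop x y)) h) g"
    using mult by (simp add: pairing_la_mult I_prod_fin_supp)
  also have "\<dots> = pairing (\<lambda>x. pairing (\<lambda>y. ?q x + ?q y + of_int (binom2 (fst x)) * ?p y) h) g"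
    by (simp add: exloop_eq)
  also have "\<dots> = pairing (\<lambda>x. of_int (binom2 (fst x))) g * pairing ?p h"
    using aug by (simp add: pairing_const_eq_0)
  also have "\<dots> = 1 / 2 * (pairing (\<lambda>x. ?p x ^ 2) g - pairing ?p g) * pairing ?p h"
    unfolding binom2_of_int by (simp only: pairing_const_mult_fun pairing_diff_fun)
  also have "\<dots> = 0"
  proof (cases "2 \<le> j")
    case True
    then show ?thesis
      using pairing_fst_power_I_prod_eq_0[of j h 1] mult by simp
  next
    case False
    then have "2 < i" using mult assms(2) by simp
    then show ?thesis
      using pairing_fst_power_I_prod_eq_0[of i g 1] pairing_fst_power_I_prod_eq_0[of i g 2] mult by simp
  qed
  finally show ?thesis .
qed simp

lemma dim_sub_exloop_subset: "2 \<le> k \<Longrightarrow> dim_sub exloop (0, 0) k \<subseteq> {(0, q) | q. True}"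
proof
  fix g assume "2 \<le> k" "g \<in> dim_sub exloop (0, 0) k"
  then have "(of_int (fst g) :: rat) = of_int (fst (0::int, 0::int))"
    using pairing_fst_power_I_prod_eq_0[of _ _ 1]
    by (intro dim_sub_value_eq[OF is_loop_exloop]) auto
  then show "g \<in> {(0, q) | q. True}" by (cases g) simp
qed

lemma dim_sub_exloop_4: "dim_sub exloop (0, 0) 4 = {(0, 0)}"
proof (intro equalityI subsetI)
  fix g assume g: "g \<in> dim_sub exloop (0, 0) 4"
  then have "fst g = 0" using dim_sub_exloop_subset[of 4] by auto
  moreover have "(of_int (snd g) :: rat) = of_int (snd (0::int, 0::int))"
    using g pairing_snd_I_prod_eq_0 by (intro dim_sub_value_eq[OF is_loop_exloop]) auto
  ultimately show "g \<in> {(0, 0)}" by (cases g) simp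
qed (simp add: unit_in_dim_sub)

lemma snd_axis_in_dim_sub_3: "(0, q) \<in> dim_sub exloop (0, 0) 3"
proof (rule associator_in_dim_sub_3[OF is_loop_exloop])
  \<comment> \<open>the left inverse of \<open>(q + 2, 0)\<close>\<close>
  let ?a = "(- (q + 2), - binom2 (- (q + 2)) * (q + 2))"
  have "exloop (exloop (1, 0) (1, 0)) (q, 0) = (q + 2, q)"
    "exloop (1, 0) (exloop (1, 0) (q, 0)) = (q + 2, 0)"
    by (simp_all add: exloop_eq binom2_def)
  then show "exloop ?a (exloop (exloop (1, 0) (1, 0)) (q, 0)) = (0, q)"
    "exloop ?a (exloop (1, 0) (exloop (1, 0) (q, 0))) = (0, 0)"
    by (simp_all add: exloop_eq)
qed

lemma dim_sub_exloop_2_3: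
  assumes "k \<in> {2, 3}"
  shows "dim_sub exloop (0, 0) k = {(0, q) | q. True}"
proof
  show "dim_sub exloop (0, 0) k \<subseteq> {(0, q) | q. True}"
    using assms by (intro dim_sub_exloop_subset) auto
  have "{(0, q) | q. True} \<subseteq> dim_sub exloop (0, 0) 3"
    using snd_axis_in_dim_sub_3 by blast
  also have "\<dots> \<subseteq> dim_sub exloop (0, 0) k"
    using assms by (intro dim_sub_antimono) auto
  finally show "{(0, q) | q. True} \<subseteq> dim_sub exloop (0, 0) k" .
qed

definition heis_map :: "int \<Rightarrow> int \<Rightarrow> int \<Rightarrow> int \<times> int \<Rightarrow> int \<times> int" where
  "heis_map a b c = (\<lambda>x. (fst x + a, snd x + b + c * fst x))"

abbreviation Bij_int2 :: "(int \<times> int \<Rightarrow> int \<times> int) monoid" where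
  "Bij_int2 \<equiv> BijGroup UNIV"

lemma heis_map_eq_iff [simp]: "heis_map a b c = heis_map a' b' c' \<longleftrightarrow> a = a' \<and> b = b' \<and> c = c'"
proof
  assume "heis_map a b c = heis_map a' b' c'"
  then have "heis_map a b c (0, 0) = heis_map a' b' c' (0, 0)" "heis_map a b c (1, 0) = heis_map a' b' c' (1, 0)"
    by simp_all
  then show "a = a' \<and> b = b' \<and> c = c'" by (simp add: heis_map_def)
qed simp

lemma heis_map_Bij: "heis_map a b c \<in> Bij UNIV"
proof -
  have "bij (heis_map a b c)"
    by (rule o_bij[where g="heis_map (- a) (- b + c * a) (- c)"])
       (auto simp: heis_map_def fun_eq_iff algebra_simps)
  then show ?thesis by (simp add: Bij_def)
qed

lemma heis_map_mult:
  "heis_map a b c \<otimes>\<^bsub>Bij_int2\<^esub> heis_map a' b' c' = heis_map (a + a') (b + b' + c * a') (c + c')"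
  by (simp add: BijGroup_def heis_map_Bij) (simp add: compose_def heis_map_def fun_eq_iff algebra_simps)

lemma heis_map_one: "\<one>\<^bsub>Bij_int2\<^esub> = heis_map 0 0 0"
  by (simp add: BijGroup_def heis_map_def fun_eq_iff)

lemma heis_map_inv: "inv\<^bsub>Bij_int2\<^esub> (heis_map a b c) = heis_map (- a) (- b + c * a) (- c)"
  by (rule group.inv_equality[OF group_BijGroup])
     (simp_all add: heis_map_mult heis_map_one, simp_all add: heis_map_Bij BijGroup_def)

lemma exloop_left_mult_eq_heis_map:
  "(\<lambda>x. exloop u x) = heis_map (fst u) (snd u) (binom2 (fst u))"
  by (simp add: heis_map_def exloop_eq fun_eq_iff algebra_simps)

lemma carrier_LMlt_exloop: "carrier (LMlt exloop) = generate Bij_int2 (range (\<lambda>u x. exloop u x))"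
proof -
  have "range (\<lambda>u x. exloop u x) \<subseteq> carrier Bij_int2"
    using heis_map_Bij by (auto simp: exloop_left_mult_eq_heis_map BijGroup_def)
  then show ?thesis by (simp add: LMlt_def carrier_subgroup_generated Int_absorb1)
qed

lemma LMlt_exloop_elem:
  assumes "f \<in> carrier (LMlt exloop)"
  obtains a b c where "f = heis_map a b c"
proof -
  have "f \<in> generate Bij_int2 (range (\<lambda>u x. exloop u x))"
    using assms by (simp add: carrier_LMlt_exloop)
  then have "\<exists>a b c. f = heis_map a b c"
  proof (induction rule: generate.induct)
    case one
    then show ?case by (auto simp: heis_map_one)
  next
    case (incl h)
    then show ?case by (auto simp: exloop_left_mult_eq_heis_map)
  next
    case (inv h)
    then show ?case by (auto simp: exloop_left_mult_eq_heis_map heis_map_inv)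
  next
    case (eng h1 h2)
    then show ?case by (auto simp: heis_map_mult)
  qed
  then show ?thesis using that by blast
qed

lemma LMlt_exloop_mult:
  "heis_map a b c \<otimes>\<^bsub>LMlt exloop\<^esub> heis_map a' b' c' = heis_map (a + a') (b + b' + c * a') (c + c')"
  by (simp add: LMlt_def heis_map_mult)

lemma LMlt_exloop_inv:
  "heis_map a b c \<in> carrier (LMlt exloop) \<Longrightarrow>
    inv\<^bsub>LMlt exloop\<^esub> (heis_map a b c) = heis_map (- a) (- b + c * a) (- c)"
  unfolding LMlt_def by (simp add: group.inv_subgroup_generated[OF group_BijGroup] heis_map_inv)

lemma LMlt_exloop_one: "\<one>\<^bsub>LMlt exloop\<^esub> = heis_map 0 0 0"
  by (simp add: LMlt_def heis_map_one)

lemma LMlt_exloop_commutator: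
  assumes "heis_map a b c \<in> carrier (LMlt exloop)" "heis_map a' b' c' \<in> carrier (LMlt exloop)"
  shows "inv\<^bsub>LMlt exloop\<^esub> (heis_map a b c) \<otimes>\<^bsub>LMlt exloop\<^esub> inv\<^bsub>LMlt exloop\<^esub> (heis_map a' b' c')
           \<otimes>\<^bsub>LMlt exloop\<^esub> heis_map a b c \<otimes>\<^bsub>LMlt exloop\<^esub> heis_map a' b' c'
         = heis_map 0 (c * a' - c' * a) 0"
  using assms by (simp add: LMlt_exloop_inv LMlt_exloop_mult algebra_simps)

lemma exloop_left_mult_in_LMlt: "(\<lambda>x. exloop u x) \<in> carrier (LMlt exloop)"
  by (simp add: carrier_LMlt_exloop generate.incl)

lemma heis_map_in_center_LMlt:
  assumes "heis_map 0 b 0 \<in> carrier (LMlt exloop)"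
  shows "heis_map 0 b 0 \<in> center (LMlt exloop)"
proof -
  have "f \<otimes>\<^bsub>LMlt exloop\<^esub> heis_map 0 b 0 = heis_map 0 b 0 \<otimes>\<^bsub>LMlt exloop\<^esub> f"
    if "f \<in> carrier (LMlt exloop)" for f
    using that by (elim LMlt_exloop_elem) (simp add: LMlt_exloop_mult)
  with assms show ?thesis by (simp add: center_def)
qed

lemma lower_central_LMlt_exloop_subset_center:
  "lower_central (LMlt exloop) 1 \<subseteq> center (LMlt exloop)"
proof -
  let ?G = "LMlt exloop"
  interpret G: group ?G by (rule group_LMlt)
  show ?thesis unfolding One_nat_def
  proof (rule G.lower_central_Suc_subset[OF G.subgroup_center])
    fix g h assume g: "g \<in> carrier ?G" and "h \<in> lower_central ?G 0"
    then have h: "h \<in> carrier ?G" by simp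
    obtain a b c a' b' c' where "g = heis_map a b c" "h = heis_map a' b' c'"
      using g h by (metis LMlt_exloop_elem)
    moreover have "inv\<^bsub>?G\<^esub> g \<otimes>\<^bsub>?G\<^esub> inv\<^bsub>?G\<^esub> h \<otimes>\<^bsub>?G\<^esub> g \<otimes>\<^bsub>?G\<^esub> h \<in> carrier ?G"
      using g h by simp
    ultimately show "inv\<^bsub>?G\<^esub> g \<otimes>\<^bsub>?G\<^esub> inv\<^bsub>?G\<^esub> h \<otimes>\<^bsub>?G\<^esub> g \<otimes>\<^bsub>?G\<^esub> h \<in> center ?G"
      using g h by (simp add: LMlt_exloop_commutator heis_map_in_center_LMlt)
  qed
qed

lemma lower_central_LMlt_exloop_nontrivial:
  "lower_central (LMlt exloop) 1 \<noteq> {\<one>\<^bsub>LMlt exloop\<^esub>}"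
proof -
  let ?G = "LMlt exloop" and ?g = "heis_map 1 0 0" and ?h = "heis_map 2 0 1"
  have "?g = (\<lambda>x. exloop (1, 0) x)" "?h = (\<lambda>x. exloop (2, 0) x)"
    by (simp_all add: exloop_left_mult_eq_heis_map binom2_def)
  then have gh: "?g \<in> carrier ?G" "?h \<in> carrier ?G"
    using exloop_left_mult_in_LMlt by metis+
  then have "inv\<^bsub>?G\<^esub> ?g \<otimes>\<^bsub>?G\<^esub> inv\<^bsub>?G\<^esub> ?h \<otimes>\<^bsub>?G\<^esub> ?g \<otimes>\<^bsub>?G\<^esub> ?h \<in> lower_central ?G 1"
    by (auto intro: generate.incl)
  moreover have "inv\<^bsub>?G\<^esub> ?g \<otimes>\<^bsub>?G\<^esub> inv\<^bsub>?G\<^esub> ?h \<otimes>\<^bsub>?G\<^esub> ?g \<otimes>\<^bsub>?G\<^esub> ?h \<noteq> \<one>\<^bsub>?G\<^esub>"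
    using gh by (simp add: LMlt_exloop_commutator LMlt_exloop_one)
  ultimately show ?thesis by blast
qed

lemma nilpotent_class_LMlt_exloop: "nilpotent_class (LMlt exloop) 2"
proof -
  have "lower_central (LMlt exloop) 2 = {\<one>\<^bsub>LMlt exloop\<^esub>}"
    using group.lower_central_Suc_trivial[OF group_LMlt lower_central_LMlt_exloop_subset_center]
    by (simp only: numeral_2_eq_2 One_nat_def)
  then show ?thesis
    using lower_central_LMlt_exloop_nontrivial
    by (simp add: nilpotent_class_def del: lower_central.simps)
qed

theorem proposition3p4:
  shows "is_loop exloop (0, 0)
    \<and> tf_nilpotent_class exloop (0, 0) 3
    \<and> dim_sub exloop (0, 0) 2 = {(0, q) | q. True}
    \<and> dim_sub exloop (0, 0) 3 = {(0, q) | q. True}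
    \<and> nilpotent_class (LMlt exloop) 2"
proof -
  have "dim_sub exloop (0, 0) 3 \<noteq> {(0, 0)}"
    using snd_axis_in_dim_sub_3[of 1] by auto
  then have "tf_nilpotent_class exloop (0, 0) 3"
    using dim_sub_exloop_4 by (simp add: tf_nilpotent_class_def)
  then show ?thesis
    using is_loop_exloop dim_sub_exloop_2_3 nilpotent_class_LMlt_exloop by simp
qed

end
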